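(* Let $\mathcal P$ be an equal-area CPOS $2n$-gon which is not symmetric with respect to any point. Then for every $i$, $D(i-\tfrac12)\ne D(i+\tfrac12)$ and $M_i$ is the midpoint of the segment $D(i-\tfrac12)D(i+\tfrac12)$. Moreover every vertex of the area evolute and every vertex of the central symmetry set is a cusp; in particular both have exactly $n$ cusps.
   Context: A CPOS $2n$-gon ($n\ge2$) is a closed planar polygon $\mathcal P$ with vertices $P_1,\dots,P_{2n}$ (indices mod $2n$) bounding a convex region, with no two adjacent sides parallel, with $P_{i+n+1}-P_{i+n}$ parallel to $P_{i+1}-P_i$ for all $i$, and positively oriented: $[P_{i+1}-P_i,P_{j+1}-P_j]>0$ for $1\le i<j\le n$ ($[\cdot,\cdot]$ = determinant). It is equal-area if $[P_{i+1}-P_i,P_i-P_{i-1}]$ is independent of $i$, and symmetric w.r.t. $O$ if $P_{i+n}-O=O-P_i$ for all $i$. $d_i$ is the line through $P_i,P_{i+n}$; $D(i+\tfrac12)=d_i\cap d_{i+1}$; the central symmetry set is the closed polygon with vertices $D(1+\tfrac12),\dots,D(n+\tfrac12)$; $M_i=\tfrac12(P_i+P_{i+n})$ and the area evolute is the closed polygon with vertices $M_1,\dots,M_n$. Define $\lambda(i+\tfrac12)$, $1\le i\le 2n$, by $D(i+\tfrac12)=P_i+\lambda(i+\tfrac12)(P_{i+n}-P_i)$ (with $D(i+n+\frac12)=D(i+\frac12)$). A vertex $D(i_0+\tfrac12)$ is a cusp if $\lambda(i_0+\tfrac12)$ is a local extremum of the cyclic sequence $(\lambda(i+\tfrac12))_{i\bmod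 2n}$; a vertex $M_{i_0}$ is a cusp if $(\lambda(i_0-\tfrac12)-\tfrac12)(\lambda(i_0+\tfrac12)-\tfrac12)<0$. *)

theory Defs
  imports "HOL-Analysis.Analysis"
begin

definition det2 :: "real^2 \<Rightarrow> real^2 \<Rightarrow> real" where
  "det2 u v = u$1 * v$2 - u$2 * v$1"

text \<open>A polygon with 2n vertices is given by P :: int => real^2, periodic of period 2n
  (indices mod 2n).\<close>
definition periodic2n :: "nat \<Rightarrow> (int \<Rightarrow> real^2) \<Rightarrow> bool" where
  "periodic2n n P \<longleftrightarrow> (\<forall>i. P (i + 2 * int n) = P i)"

text \<open>The closed polygon bounds a convex region: every vertex lies in the closed
  half-plane to the left of every (oriented) side.\<close>
definition convex_polygon :: "(int \<Rightarrow> real^2) \<Rightarrow> bool" where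
  "convex_polygon P \<longleftrightarrow> (\<forall>i j. det2 (P (i+1) - P i) (P j - P i) \<ge> 0)"

definition CPOS :: "nat \<Rightarrow> (int \<Rightarrow> real^2) \<Rightarrow> bool" where
  "CPOS n P \<longleftrightarrow> n \<ge> 2 \<and> periodic2n n P \<and> convex_polygon P
     \<and> (\<forall>i. det2 (P (i+1) - P i) (P i - P (i-1)) \<noteq> 0)
     \<and> (\<forall>i. det2 (P (i + int n + 1) - P (i + int n)) (P (i+1) - P i) = 0)
     \<and> (\<forall>i j. 1 \<le> i \<and> i < j \<and> j \<le> int n \<longrightarrow> det2 (P (i+1) - P i) (P (j+1) - P j) > 0)"

definition equal_area :: "(int \<Rightarrow> real^2) \<Rightarrow> bool" where
  "equal_area P \<longleftrightarrow> (\<forall>i j. det2 (P (i+1) - P i) (P i - P (i-1)) = det2 (P (j+1) - P j) (P j - P (j-1)))"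

definition symmetric_wrt :: "nat \<Rightarrow> (int \<Rightarrow> real^2) \<Rightarrow> real^2 \<Rightarrow> bool" where
  "symmetric_wrt n P c \<longleftrightarrow> (\<forall>i. P (i + int n) - c = c - P i)"

definition dline :: "nat \<Rightarrow> (int \<Rightarrow> real^2) \<Rightarrow> int \<Rightarrow> (real^2) set" where
  "dline n P i = {P i + t *\<^sub>R (P (i + int n) - P i) | t. True}"

text \<open>lam n P i is lambda(i+1/2): the parameter with D(i+1/2) = P_i + lambda (P_{i+n} - P_i),
  where D(i+1/2) is the intersection point of d_i and d_{i+1}.\<close>
definition lam :: "nat \<Rightarrow> (int \<Rightarrow> real^2) \<Rightarrow> int \<Rightarrow> real" where
  "lam n P i = (THE t. P i + t *\<^sub>R (P (i + int n) - P i) \<in> dline n P (i+1))"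

text \<open>Dh n P i is D(i+1/2) = d_i \<inter> d_{i+1}.\<close>
definition Dh :: "nat \<Rightarrow> (int \<Rightarrow> real^2) \<Rightarrow> int \<Rightarrow> real^2" where
  "Dh n P i = (THE x. x \<in> dline n P i \<inter> dline n P (i+1))"

definition Mid :: "nat \<Rightarrow> (int \<Rightarrow> real^2) \<Rightarrow> int \<Rightarrow> real^2" where
  "Mid n P i = (1/2) *\<^sub>R (P i + P (i + int n))"

text \<open>D(i0+1/2) is a cusp: lambda(i0+1/2) is a (strict) local extremum of the cyclic sequence.\<close>
definition css_cusp :: "nat \<Rightarrow> (int \<Rightarrow> real^2) \<Rightarrow> int \<Rightarrow> bool" where
  "css_cusp n P i0 \<longleftrightarrow>
     (lam n P i0 > lam n P (i0-1) \<and> lam n P i0 > lam n P (i0+1)) \<or>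
     (lam n P i0 < lam n P (i0-1) \<and> lam n P i0 < lam n P (i0+1))"

definition ae_cusp :: "nat \<Rightarrow> (int \<Rightarrow> real^2) \<Rightarrow> int \<Rightarrow> bool" where
  "ae_cusp n P i0 \<longleftrightarrow> (lam n P (i0-1) - 1/2) * (lam n P i0 - 1/2) < 0"

end

theory Submission
  imports Defs
begin

(* Write e_i = P_{i+1} - P_i for the sides and w_i = P_{i+n} - P_i for the diagonals.
   Parallel opposite sides give ratios s_i with e_{i+n} = s_i e_i.  Equal area turns into
   s_i s_{i-1} = 1, and positive orientation gives s_1 < 0, so every s_i is negative.
   Convexity then shows that the side e_i turns positively into the diagonal w_i, and
   w_{i+1} = w_i + (s_i - 1) e_i.  Solving d_i \<inter> d_{i+1} explicitly gives
   lambda(i+1/2) = 1/(1 - s_i), with D(i+1/2) = P_i + lambda(i+1/2) w_i = P_{i+1} + lambda(i+1/2) w_{i+1}.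
   From s_i s_{i-1} = 1 we get lambda(i-1/2) + lambda(i+1/2) = 1, and lambda = 1/2 anywhere forces
   s = -1 everywhere, i.e. central symmetry. *)

lemma det2_add_l: "det2 (u + v) w = det2 u w + det2 v w" by (simp add: det2_def algebra_simps)
lemma det2_add_r: "det2 w (u + v) = det2 w u + det2 w v" by (simp add: det2_def algebra_simps)
lemma det2_diff_l: "det2 (u - v) w = det2 u w - det2 v w" by (simp add: det2_def algebra_simps)
lemma det2_diff_r: "det2 w (u - v) = det2 w u - det2 w v" by (simp add: det2_def algebra_simps)
lemma det2_scale_l: "det2 (a *\<^sub>R u) w = a * det2 u w" by (simp add: det2_def algebra_simps)
lemma det2_scale_r: "det2 w (a *\<^sub>R u) = a * det2 w u" by (simp add: det2_def algebra_simps)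
lemma det2_self: "det2 u u = 0" by (simp add: det2_def algebra_simps)
lemma det2_swap: "det2 v u = - det2 u v" by (simp add: det2_def algebra_simps)
lemma det2_zero_left: "det2 0 u = 0" by (simp add: det2_def)

lemmas det2_lin = det2_add_l det2_add_r det2_diff_l det2_diff_r det2_scale_l det2_scale_r det2_self

lemma det2_zero_imp_multiple:
  assumes "det2 u v = 0" "v \<noteq> 0"
  shows "\<exists>s. u = s *\<^sub>R v"
proof -
  have "v$1 \<noteq> 0 \<or> v$2 \<noteq> 0" using assms(2) by (auto simp: vec_eq_iff forall_2)
  then show ?thesis
  proof
    assume "v$1 \<noteq> 0"
    with assms(1) show ?thesis
      by (intro exI[of _ "u$1 / v$1"]) (auto simp: vec_eq_iff forall_2 det2_def field_simps)
  next
    assume "v$2 \<noteq> 0"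
    with assms(1) show ?thesis
      by (intro exI[of _ "u$2 / v$2"]) (auto simp: vec_eq_iff forall_2 det2_def field_simps)
  qed
qed

text \<open>This is the computation of d_i \<inter> d_{i+1}.\<close>
lemma lines_meet_iff:
  fixes p e w :: "real^2"
  assumes indep: "det2 e w > 0" and s: "s \<noteq> 1"
  shows "p + t *\<^sub>R w = (p + e) + u *\<^sub>R (w + (s - 1) *\<^sub>R e) \<longleftrightarrow> t = 1/(1 - s) \<and> u = 1/(1 - s)"
proof
  assume "p + t *\<^sub>R w = (p + e) + u *\<^sub>R (w + (s - 1) *\<^sub>R e)"
  then have eq: "t *\<^sub>R w = e + u *\<^sub>R w + (u * (s - 1)) *\<^sub>R e"
    by (simp add: algebra_simps)
  have "det2 e (t *\<^sub>R w) = det2 e (e + u *\<^sub>R w + (u * (s - 1)) *\<^sub>R e)" using eq by simp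
  then have "t * det2 e w = u * det2 e w" by (simp add: det2_lin)
  then have tu: "t = u" using indep by simp
  have "det2 w (t *\<^sub>R w) = det2 w (e + u *\<^sub>R w + (u * (s - 1)) *\<^sub>R e)" using eq by simp
  then have "det2 w e * (1 + u * (s - 1)) = 0" by (simp add: det2_lin algebra_simps)
  moreover have "det2 w e \<noteq> 0" using indep det2_swap[of w e] by simp
  ultimately have "1 + u * (s - 1) = 0" by simp
  then have "u = 1/(1 - s)" using s by (simp add: field_simps)
  with tu show "t = 1/(1 - s) \<and> u = 1/(1 - s)" by simp
next
  assume tu: "t = 1/(1 - s) \<and> u = 1/(1 - s)"
  then have "(1 + u * (s - 1)) *\<^sub>R e = 0" using s by (simp add: field_simps)
  then have "(p + e) + u *\<^sub>R (w + (s - 1) *\<^sub>R e) = p + u *\<^sub>R w"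
    by (simp add: algebra_simps)
  with tu show "p + t *\<^sub>R w = (p + e) + u *\<^sub>R (w + (s - 1) *\<^sub>R e)" by simp
qed

lemma reciprocal_params_sum:
  fixes a b :: real
  assumes "a * b = 1" "a < 0"
  shows "1/(1 - b) + 1/(1 - a) = 1"
proof -
  have a: "a \<noteq> 0" "a - 1 \<noteq> 0" using assms(2) by auto
  have b: "b = 1/a" using assms(1) a(1) by (simp add: field_simps)
  have "1/(1 - b) = a/(a - 1)" unfolding b using a by (simp add: field_simps)
  moreover have "1/(1 - a) = -1/(a - 1)" by (simp add: divide_simps)
  ultimately show ?thesis
    using a(2) by (simp add: diff_divide_distrib[symmetric] add_divide_distrib[symmetric])
qed

section \<open>Equal-area CPOS polygons\<close>

locale equal_area_cpos =
  fixes n :: nat and P :: "int \<Rightarrow> real^2"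
  assumes cpos: "CPOS n P" and equal_area: "equal_area P"
begin

definition edge :: "int \<Rightarrow> real^2" where "edge i = P (i + 1) - P i"
definition diag :: "int \<Rightarrow> real^2" where "diag i = P (i + int n) - P i"

lemma n_ge_2: "n \<ge> 2"
  using cpos by (simp add: CPOS_def)

lemma convex: "det2 (P (i + 1) - P i) (P j - P i) \<ge> 0"
  using cpos by (simp add: CPOS_def convex_polygon_def)

text \<open>Consecutive sides turn strictly to the left (convexity plus non-parallel neighbours).\<close>
lemma edge_turn: "det2 (edge (i - 1)) (edge i) > 0"
proof -
  have "det2 (edge (i - 1)) (P (i + 1) - P (i - 1)) \<ge> 0"
    using convex[of "i - 1" "i + 1"] by (simp add: edge_def)
  moreover have "P (i + 1) - P (i - 1) = edge (i - 1) + edge i" by (simp add: edge_def)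
  moreover have "det2 (edge i) (edge (i - 1)) \<noteq> 0" using cpos by (simp add: CPOS_def edge_def)
  ultimately show ?thesis using det2_swap[of "edge i" "edge (i - 1)"] by (simp add: det2_lin)
qed

lemma edge_turn_next: "det2 (edge i) (edge (i + 1)) > 0"
  using edge_turn[of "i + 1"] by simp

lemma edge_nonzero: "edge i \<noteq> 0"
  using edge_turn_next[of i] by (auto simp: det2_zero_left)

definition ratio :: "int \<Rightarrow> real" where
  "ratio i = (SOME s. edge (i + int n) = s *\<^sub>R edge i)"

lemma edge_opposite: "edge (i + int n) = ratio i *\<^sub>R edge i"
proof -
  have "det2 (edge (i + int n)) (edge i) = 0"
    using cpos by (simp add: CPOS_def edge_def add.assoc)
  then have "\<exists>s. edge (i + int n) = s *\<^sub>R edge i"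
    using edge_nonzero by (rule det2_zero_imp_multiple)
  then show ?thesis unfolding ratio_def by (rule someI_ex)
qed

text \<open>Equal area: the turn at P_i equals the turn at P_{i+n}, which is s_i s_{i-1} times it.\<close>
lemma ratio_product: "ratio i * ratio (i - 1) = 1"
proof -
  have "det2 (edge i) (edge (i - 1)) = det2 (edge (i + int n)) (edge (i + int n - 1))"
    using equal_area unfolding equal_area_def edge_def by (metis diff_add_cancel)
  also have "edge (i + int n - 1) = ratio (i - 1) *\<^sub>R edge (i - 1)"
    using edge_opposite[of "i - 1"] by (simp add: algebra_simps)
  finally have "det2 (edge i) (edge (i - 1)) = (ratio i * ratio (i - 1)) * det2 (edge i) (edge (i - 1))"
    by (simp add: edge_opposite det2_lin mult.commute)
  moreover have "det2 (edge i) (edge (i - 1)) \<noteq> 0"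
    using edge_turn[of i] det2_swap[of "edge i" "edge (i - 1)"] by simp
  ultimately show ?thesis by simp
qed

text \<open>Positive orientation makes e_{n+1} point against e_1.\<close>
lemma ratio_first_neg: "ratio 1 < 0"
proof -
  have "\<forall>i j. 1 \<le> i \<and> i < j \<and> j \<le> int n \<longrightarrow> det2 (edge i) (edge j) > 0"
    using cpos by (simp add: CPOS_def edge_def)
  then have pos: "det2 (edge 1) (edge (int n)) > 0"
    using n_ge_2 by simp
  have "edge (int n + 1) = ratio 1 *\<^sub>R edge 1" using edge_opposite[of 1] by (simp add: add.commute)
  then have "ratio 1 * det2 (edge (int n)) (edge 1) > 0"
    using edge_turn_next[of "int n"] by (simp add: det2_lin)
  then have "- ratio 1 * det2 (edge 1) (edge (int n)) > 0"
    using det2_swap[of "edge (int n)" "edge 1"] by simp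
  with pos show ?thesis by (simp add: mult_less_0_iff)
qed

text \<open>Since s_i s_{i-1} = 1, all ratios share the sign of s_1: opposite sides are antiparallel.\<close>
lemma ratio_neg: "ratio i < 0"
proof (induct i rule: int_induct[where k = 1])
  case base
  show ?case by (rule ratio_first_neg)
next
  case (step1 i)
  have "0 < ratio (i + 1) * ratio i" using ratio_product[of "i + 1"] by simp
  with step1 show ?case by (simp add: zero_less_mult_iff)
next
  case (step2 i)
  have "0 < ratio i * ratio (i - 1)" using ratio_product[of i] by simp
  with step2 show ?case by (simp add: zero_less_mult_iff)
qed

text \<open>Convexity at P_{i+n}, with e_{i+n} antiparallel to e_i, shows that the diagonal w_i
  lies strictly to the left of the side e_i.\<close>
lemma diag_turn: "det2 (edge i) (diag i) > 0"
proof -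
  have "ratio i * det2 (edge i) (P (i + 2) - P (i + int n)) \<ge> 0"
    using convex[of "i + int n" "i + 2"] edge_opposite[of i]
    by (simp add: edge_def det2_scale_l add.assoc)
  then have nonpos: "det2 (edge i) (P (i + 2) - P (i + int n)) \<le> 0"
    using ratio_neg[of i] by (simp add: zero_le_mult_iff)
  have "P (i + 2) - P (i + int n) = edge i + edge (i + 1) - diag i"
    by (simp add: edge_def diag_def algebra_simps)
  then have "det2 (edge i) (P (i + 2) - P (i + int n)) = det2 (edge i) (edge (i + 1)) - det2 (edge i) (diag i)"
    by (simp add: det2_lin)
  with nonpos edge_turn_next[of i] show ?thesis by simp
qed

lemma diag_nonzero: "diag i \<noteq> 0"
  using diag_turn[of i] by (auto simp: det2_def)

lemma vertex_next: "P (i + 1) = P i + edge i"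
  by (simp add: edge_def)

lemma diag_next: "diag (i + 1) = diag i + (ratio i - 1) *\<^sub>R edge i"
proof -
  have "P (i + 1 + int n) = P (i + int n) + ratio i *\<^sub>R edge i"
    using edge_opposite[of i] unfolding edge_def by (simp add: algebra_simps)
  then show ?thesis by (simp add: diag_def edge_def algebra_simps)
qed

lemma dline_diag: "dline n P i = {P i + t *\<^sub>R diag i | t. True}"
  by (simp add: dline_def diag_def)

lemma on_next_dline_iff:
  "P i + t *\<^sub>R diag i \<in> dline n P (i + 1) \<longleftrightarrow> t = 1/(1 - ratio i)"
proof -
  have s: "ratio i \<noteq> 1" using ratio_neg[of i] by simp
  have "P i + t *\<^sub>R diag i \<in> dline n P (i + 1) \<longleftrightarrow>
      (\<exists>u. P i + t *\<^sub>R diag i = (P i + edge i) + u *\<^sub>R (diag i + (ratio i - 1) *\<^sub>R edge i))"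
    unfolding dline_diag vertex_next diag_next by auto
  also have "\<dots> \<longleftrightarrow> t = 1/(1 - ratio i)"
    using lines_meet_iff[OF diag_turn s] by auto
  finally show ?thesis .
qed

lemma lam_eq: "lam n P i = 1/(1 - ratio i)"
  unfolding lam_def using on_next_dline_iff[of i] by (simp add: diag_def[symmetric])

lemma Dh_eq: "Dh n P i = P i + lam n P i *\<^sub>R diag i"
proof -
  have "x \<in> dline n P i \<inter> dline n P (i + 1) \<longleftrightarrow> x = P i + lam n P i *\<^sub>R diag i" for x
    using on_next_dline_iff[of i] unfolding dline_diag[of i] lam_eq by auto
  then show ?thesis unfolding Dh_def by simp
qed

lemma Dh_prev_eq: "Dh n P (i - 1) = P i + lam n P (i - 1) *\<^sub>R diag i"
proof -
  have s: "ratio (i - 1) \<noteq> 1" using ratio_neg[of "i - 1"] by simp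
  have "Dh n P (i - 1) = (P (i - 1) + edge (i - 1))
      + lam n P (i - 1) *\<^sub>R (diag (i - 1) + (ratio (i - 1) - 1) *\<^sub>R edge (i - 1))"
    unfolding Dh_eq lam_eq using lines_meet_iff[OF diag_turn s] by simp
  then show ?thesis using vertex_next[of "i - 1"] diag_next[of "i - 1"] by simp
qed

lemma lam_sum: "lam n P (i - 1) + lam n P i = 1"
  unfolding lam_eq using ratio_product[of i] ratio_neg[of i] by (rule reciprocal_params_sum)

lemma lam_sum_next: "lam n P i + lam n P (i + 1) = 1"
  using lam_sum[of "i + 1"] by simp

text \<open>A single antiparallel pair of equal length forces s = -1 everywhere, hence
  P_j + P_{j+n} is constant and the polygon is centrally symmetric.\<close>
lemma ratio_minus_one_imp_symmetric:
  assumes "ratio i = -1"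
  shows "\<exists>c. symmetric_wrt n P c"
proof -
  have all: "ratio j = -1" for j
  proof (induct j rule: int_induct[where k = i])
    case base
    show ?case by (rule assms)
  next
    case (step1 j)
    with ratio_product[of "j + 1"] show ?case by simp
  next
    case (step2 j)
    with ratio_product[of j] show ?case by simp
  qed
  have sum_const: "P j + P (j + int n) = P 0 + P (int n)" for j
  proof (induct j rule: int_induct[where k = 0])
    case base
    show ?case by simp
  next
    case (step1 j)
    have "P (j + 1 + int n) = P (j + int n) - edge j"
      using edge_opposite[of j] all[of j] unfolding edge_def by (simp add: algebra_simps)
    with step1 show ?case using vertex_next[of j] by (simp add: algebra_simps)
  next
    case (step2 j)
    have "P (j + int n) = P (j - 1 + int n) - edge (j - 1)"
      using edge_opposite[of "j - 1"] all[of "j - 1"] unfolding edge_def by (simp add: algebra_simps)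
    with step2 show ?case using vertex_next[of "j - 1"] by (simp add: algebra_simps)
  qed
  define c where "c = (1/2) *\<^sub>R (P 0 + P (int n))"
  have cc: "P 0 + P (int n) = c + c" by (simp add: c_def scaleR_left_distrib[symmetric])
  have "P (j + int n) - c = c - P j" for j
    using sum_const[of j] unfolding cc by (simp add: algebra_simps)
  then have "symmetric_wrt n P c" unfolding symmetric_wrt_def by blast
  then show ?thesis by blast
qed

lemma lam_ne_half:
  assumes "\<not> (\<exists>c. symmetric_wrt n P c)"
  shows "lam n P i \<noteq> 1/2"
proof
  assume "lam n P i = 1/2"
  then have "ratio i = -1" using ratio_neg[of i] unfolding lam_eq by (simp add: field_simps)
  with assms ratio_minus_one_imp_symmetric show False by blast
qed

text \<open>M_i is the midpoint of D(i-1/2) D(i+1/2), since both lie on d_i with complementary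
  parameters.\<close>
lemma Mid_is_midpoint: "Mid n P i = (1/2) *\<^sub>R (Dh n P (i - 1) + Dh n P i)"
proof -
  have "Dh n P (i - 1) + Dh n P i = P i + P i + (lam n P (i - 1) + lam n P i) *\<^sub>R diag i"
    by (simp add: Dh_eq[of i] Dh_prev_eq scaleR_left_distrib algebra_simps)
  also have "\<dots> = P i + P (i + int n)" by (simp add: lam_sum diag_def)
  finally show ?thesis by (simp add: Mid_def)
qed

lemma Dh_distinct:
  assumes "\<not> (\<exists>c. symmetric_wrt n P c)"
  shows "Dh n P (i - 1) \<noteq> Dh n P i"
proof
  assume "Dh n P (i - 1) = Dh n P i"
  then have "lam n P (i - 1) *\<^sub>R diag i = lam n P i *\<^sub>R diag i" by (simp add: Dh_eq[of i] Dh_prev_eq)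
  then have "lam n P (i - 1) = lam n P i" using diag_nonzero[of i] by simp
  with lam_sum[of i] lam_ne_half[OF assms, of i] show False by simp
qed

text \<open>lambda - 1/2 alternates in sign, so every M_i is a cusp ...\<close>
lemma ae_cusp_everywhere:
  assumes "\<not> (\<exists>c. symmetric_wrt n P c)"
  shows "ae_cusp n P i"
proof -
  have flip: "lam n P (i - 1) - 1/2 = - (lam n P i - 1/2)" using lam_sum[of i] by simp
  have "lam n P i - 1/2 \<noteq> 0" using lam_ne_half[OF assms, of i] by simp
  then have "(lam n P i - 1/2) * (lam n P i - 1/2) > 0" by (metis not_real_square_gt_zero)
  then show ?thesis
    unfolding ae_cusp_def flip by (simp only: mult_minus_left neg_less_0_iff_less)
qed

text \<open>... and lambda alternates around 1/2, so every lambda(i+1/2) is a local extremum.\<close>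
lemma css_cusp_everywhere:
  assumes "\<not> (\<exists>c. symmetric_wrt n P c)"
  shows "css_cusp n P i"
  unfolding css_cusp_def using lam_sum[of i] lam_sum_next[of i] lam_ne_half[OF assms, of i] by auto

end

theorem mainTheorem5:
  fixes n :: nat and P :: "int \<Rightarrow> real^2"
  assumes "CPOS n P" and "equal_area P"
    and "\<not> (\<exists>c. symmetric_wrt n P c)"
  shows "(\<forall>i. Dh n P (i-1) \<noteq> Dh n P i \<and> Mid n P i = (1/2) *\<^sub>R (Dh n P (i-1) + Dh n P i))
    \<and> (\<forall>i. ae_cusp n P i) \<and> (\<forall>i. css_cusp n P i)
    \<and> card {i \<in> {1..int n}. ae_cusp n P i} = n
    \<and> card {i \<in> {1..int n}. css_cusp n P i} = n"
proof -
  interpret equal_area_cpos n P using assms(1,2) by unfold_locales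
  have ae: "ae_cusp n P i" and css: "css_cusp n P i" for i
    using ae_cusp_everywhere css_cusp_everywhere assms(3) by blast+
  then have "{i \<in> {1..int n}. ae_cusp n P i} = {1..int n}"
    and "{i \<in> {1..int n}. css_cusp n P i} = {1..int n}" by auto
  then show ?thesis
    using Dh_distinct[OF assms(3)] Mid_is_midpoint ae css by simp
qed

end
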